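(* For every $c>0$, $$\limsup_{k\to\infty}\ \limsup_{\epsilon\to0}\ \limsup_{N\to\infty}\ \sup_{|r|\le2\epsilon N+1}\ \sup_{f_N:\,D_N(f_N)\le c/N}\ \sum_{\eta\in\Omega}\Big\|\Big(\frac{1}{2k+1}\sum_{|z|\le k}\eta^z_1,\frac{1}{2k+1}\sum_{|z|\le k}\eta^z_2\Big)-\Big(\frac{1}{2k+1}\sum_{|z+r|\le k}\eta^z_1,\frac{1}{2k+1}\sum_{|z+r|\le k}\eta^z_2\Big)\Big\|_2 f_N(\eta)3^{-N}=0,$$ the inner supremum being over probability densities $f_N$ with respect to $\nu^{1/3}_N$, and $\|\cdot\|_2$ the Euclidean norm on $\mathbb{R}^2$.
   Context: $\mathbb{T}_N=\mathbb{Z}/N\mathbb{Z}$. Configurations $\eta=(\eta^x_\alpha)_{\alpha\in\{0,1,2\},x\in\mathbb{T}_N}$, $\eta^x_\alpha\in\{0,1\}$, $\sum_\alpha\eta^x_\alpha=1$; $\Omega$ the set of configurations ($|\Omega|=3^N$). $\eta^{x,x+1}_{\alpha,\beta}$ = configuration with contents of $x,x+1$ exchanged when $\eta^x_\alpha\eta^{x+1}_\beta=1$ (else $\eta$). $\nu^{1/3}_N$ is the uniform measure on $\Omega$; a probability density is $f_N:\Omega\to[0,\infty)$ with $\sum_\eta f_N(\eta)3^{-N}=1$. Dirichlet form: $D_N(f)=\frac12\sum_{\eta\in\Omega}3^{-N}\sum_{x\in\mathbb{T}_N}\sum_{\alpha,\beta=0}^2\eta^x_\alpha\eta^{x+1}_\beta\big(\sqrt{f(\eta^{x,x+1}_{\alpha,\beta})}-\sqrt{f(\eta)}\big)^2$.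 Site indices are taken modulo $N$. *)

theory Defs
  imports "HOL-Analysis.Analysis" "HOL-Library.Liminf_Limsup"
begin

text \<open>Configurations on the discrete torus T_N = {0..<N}: a configuration is a map
  from sites to species in {0,1,2}; eta^x_alpha = 1 iff the species at x is alpha.\<close>

definition Omega :: "nat \<Rightarrow> (nat \<Rightarrow> nat) set" where
  "Omega N = {0..<N} \<rightarrow>\<^sub>E {0..<3}"

definition occ :: "nat \<Rightarrow> (nat \<Rightarrow> nat) \<Rightarrow> nat \<Rightarrow> int \<Rightarrow> real" where
  "occ N \<eta> \<alpha> x = (if \<eta> (nat (x mod int N)) = \<alpha> then 1 else 0)"

definition exch :: "nat \<Rightarrow> (nat \<Rightarrow> nat) \<Rightarrow> nat \<Rightarrow> nat \<Rightarrow> nat \<Rightarrow> (nat \<Rightarrow> nat)" where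
  "exch N \<eta> x \<alpha> \<beta> =
     (if occ N \<eta> \<alpha> (int x) * occ N \<eta> \<beta> (int x + 1) = 1
      then \<eta>(x := \<eta> (Suc x mod N), Suc x mod N := \<eta> x) else \<eta>)"

definition is_density :: "nat \<Rightarrow> ((nat \<Rightarrow> nat) \<Rightarrow> real) \<Rightarrow> bool" where
  "is_density N f \<longleftrightarrow> (\<forall>\<eta>\<in>Omega N. 0 \<le> f \<eta>) \<and>
      (\<Sum>\<eta>\<in>Omega N. f \<eta> * (1/3) ^ N) = 1"

definition Dirichlet :: "nat \<Rightarrow> ((nat \<Rightarrow> nat) \<Rightarrow> real) \<Rightarrow> real" where
  "Dirichlet N f = (1/2) * (\<Sum>\<eta>\<in>Omega N. (1/3) ^ N * (\<Sum>x<N. \<Sum>\<alpha><3. \<Sum>\<beta><3.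
      occ N \<eta> \<alpha> (int x) * occ N \<eta> \<beta> (int x + 1) *
      (sqrt (f (exch N \<eta> x \<alpha> \<beta>)) - sqrt (f \<eta>)) ^ 2))"

definition box_diff :: "nat \<Rightarrow> nat \<Rightarrow> int \<Rightarrow> (nat \<Rightarrow> nat) \<Rightarrow> real" where
  "box_diff N k r \<eta> =
     (let a = (\<lambda>\<alpha>. (1 / (2 * real k + 1)) * (\<Sum>z\<in>{z::int. \<bar>z\<bar> \<le> int k}. occ N \<eta> \<alpha> z));
          b = (\<lambda>\<alpha>. (1 / (2 * real k + 1)) * (\<Sum>z\<in>{z::int. \<bar>z + r\<bar> \<le> int k}. occ N \<eta> \<alpha> z))
      in sqrt ((a 1 - b 1) ^ 2 + (a 2 - b 2) ^ 2))"

definition sup_quantity :: "real \<Rightarrow> nat \<Rightarrow> real \<Rightarrow> nat \<Rightarrow> ereal" where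
  "sup_quantity c k \<epsilon> N = Sup {ereal (\<Sum>\<eta>\<in>Omega N. box_diff N k r \<eta> * f \<eta> * (1/3) ^ N) | r f.
      real_of_int \<bar>r\<bar> \<le> 2 * \<epsilon> * real N + 1 \<and> is_density N f \<and> Dirichlet N f \<le> c / real N}"

end

theory Submission
  imports Defs "HOL-Real_Asymp.Real_Asymp"
begin

text \<open>Let \<open>X j = \<eta>\<^sup>j\<^sub>\<alpha> - \<eta>\<^sup>j\<^sup>-\<^sup>r\<^sub>\<alpha>\<close>, so the box difference of species \<open>\<alpha>\<close> is \<open>1/(2k+1)\<close>
  times the sum of \<open>X j\<close> over the box \<open>|j| \<le> k\<close>. In the second moment of that sum under \<open>f\<close>,
  for each \<open>j\<close> at most three sites \<open>i\<close> of the box are congruent to \<open>j\<close> or \<open>j \<plusminus> r\<close> modulo \<open>N\<close>;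
  for every other \<open>i\<close>, exchanging the contents of \<open>j\<close> and \<open>j - r\<close> flips the sign of \<open>X j\<close> and
  fixes \<open>X i\<close>, so \<open>E\<^sub>f[X i * X j]\<close> is at most half the total variation of \<open>f\<close> under this
  exchange. Cauchy-Schwarz bounds that by the energy of \<open>sqrt f\<close> under the exchange, and the
  moving particle lemma (the exchange is a product of \<open>2|r| - 1\<close> nearest-neighbour exchanges)
  bounds this energy by \<open>8|r| D(f)\<close>. Hence the expectation is at most
  \<open>sqrt (6/(2k+1) + 2 sqrt (8|r| D(f))) \<le> sqrt (6/(2k+1) + 2 sqrt (24 c \<epsilon>))\<close> for large \<open>N\<close>,
  which vanishes as \<open>\<epsilon> \<rightarrow> 0\<close> and \<open>k \<rightarrow> \<infinity>\<close>.\<close>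

definition site :: "nat \<Rightarrow> int \<Rightarrow> nat" where
  "site N z = nat (z mod int N)"

lemma site_less: "0 < N \<Longrightarrow> site N z < N"
  by (simp add: site_def nat_less_iff)

lemma site_of_nat: "x < N \<Longrightarrow> site N (int x) = x"
  by (simp add: site_def)

lemma site_eq_iff: "0 < N \<Longrightarrow> site N a = site N b \<longleftrightarrow> a mod int N = b mod int N"
  by (simp add: site_def eq_nat_nat_iff)

lemma site_add_neq:
  assumes "0 < m" "m < N"
  shows "site N a \<noteq> site N (a + int m)"
proof
  assume "site N a = site N (a + int m)"
  then have "a mod int N = (a + int m) mod int N"
    using assms by (simp add: site_eq_iff)
  then have "int N dvd int m"
    by (metis add.commute mod_eq_dvd_iff add_diff_cancel_left' dvd_minus_iff minus_diff_eq)
  then show False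
    using assms by (simp add: nat_dvd_not_less)
qed

lemma Suc_site_mod: "0 < N \<Longrightarrow> Suc (site N a) mod N = site N (a + 1)"
proof -
  assume N: "0 < N"
  have "int (Suc (site N a) mod N) = (a mod int N + 1) mod int N"
    using N by (simp add: site_def zmod_int of_nat_mod add.commute)
  also have "\<dots> = (a + 1) mod int N"
    by (simp add: mod_add_left_eq)
  finally show ?thesis
    using N by (simp add: site_def)
qed

lemma card_Omega: "card (Omega N) = 3 ^ N"
  by (simp add: Omega_def card_PiE)

lemma comp_transpose_in_Omega:
  "p < N \<Longrightarrow> q < N \<Longrightarrow> \<eta> \<in> Omega N \<Longrightarrow> \<eta> \<circ> Transposition.transpose p q \<in> Omega N"
  by (auto simp: Omega_def PiE_iff extensional_def Transposition.transpose_def)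

lemma sum_Omega_comp_transpose:
  assumes "p < N" "q < N"
  shows "(\<Sum>\<eta>\<in>Omega N. h (\<eta> \<circ> Transposition.transpose p q)) = (\<Sum>\<eta>\<in>Omega N. h \<eta>)"
proof -
  have "bij_betw (\<lambda>\<eta>. \<eta> \<circ> Transposition.transpose p q) (Omega N) (Omega N)"
    by (rule bij_betwI[where g = "\<lambda>\<eta>. \<eta> \<circ> Transposition.transpose p q"])
      (auto simp: assms comp_transpose_in_Omega comp_assoc)
  then show ?thesis
    by (rule sum.reindex_bij_betw)
qed

definition bond :: "nat \<Rightarrow> nat \<Rightarrow> nat \<Rightarrow> nat" where
  "bond N x = Transposition.transpose x (Suc x mod N)"

lemma bond_site: "0 < N \<Longrightarrow> bond N (site N a) = Transposition.transpose (site N a) (site N (a + 1))"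
  by (simp add: bond_def Suc_site_mod)

lemma sum_Omega_comp_bond:
  "x < N \<Longrightarrow> (\<Sum>\<eta>\<in>Omega N. h (\<eta> \<circ> bond N x)) = (\<Sum>\<eta>\<in>Omega N. h \<eta>)"
  unfolding bond_def by (rule sum_Omega_comp_transpose) auto

definition bond_energy :: "nat \<Rightarrow> ((nat \<Rightarrow> nat) \<Rightarrow> real) \<Rightarrow> nat \<Rightarrow> real" where
  "bond_energy N g x = (\<Sum>\<eta>\<in>Omega N. (g (\<eta> \<circ> bond N x) - g \<eta>)\<^sup>2)"

lemma bond_energy_nonneg: "0 \<le> bond_energy N g x"
  by (simp add: bond_energy_def sum_nonneg)

definition route_perm :: "nat \<Rightarrow> nat list \<Rightarrow> nat \<Rightarrow> nat" where
  "route_perm N ts = foldr (\<lambda>t \<pi>. bond N t \<circ> \<pi>) ts id"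

lemma route_perm_Nil [simp]: "route_perm N [] = id"
  by (simp add: route_perm_def)

lemma route_perm_Cons [simp]: "route_perm N (t # ts) = bond N t \<circ> route_perm N ts"
  by (simp add: route_perm_def)

lemma route_perm_append: "route_perm N (xs @ ys) = route_perm N xs \<circ> route_perm N ys"
  by (induction xs) (simp_all add: comp_assoc)

lemma power2_add_le_weighted:
  assumes "L > 0"
  shows "((a::real) + b)\<^sup>2 \<le> (1 + 1 / L) * a\<^sup>2 + (1 + L) * b\<^sup>2"
proof -
  have "0 \<le> (a / sqrt L - b * sqrt L)\<^sup>2"
    by simp
  also have "\<dots> = a\<^sup>2 / L - 2 * a * b + b\<^sup>2 * L"
    using assms by (simp add: power2_eq_square field_simps)
  finally show ?thesis
    by (simp add: power2_eq_square algebra_simps add_divide_distrib)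
qed

text \<open>Telescoping along the route; splitting off one bond at a time with the weight
  \<open>L = length of the remaining route\<close> keeps the constant equal to the length.\<close>

lemma route_energy_le:
  assumes "\<forall>t\<in>set ts. t < N"
  shows "(\<Sum>\<eta>\<in>Omega N. (g (\<eta> \<circ> route_perm N ts) - g \<eta>)\<^sup>2)
           \<le> real (length ts) * (\<Sum>t\<leftarrow>ts. bond_energy N g t)"
  using assms
proof (induction ts)
  case Nil
  then show ?case
    by simp
next
  case (Cons t ts)
  have t: "t < N"
    using Cons.prems by simp
  have IH: "(\<Sum>\<eta>\<in>Omega N. (g (\<eta> \<circ> route_perm N ts) - g \<eta>)\<^sup>2)
              \<le> real (length ts) * (\<Sum>t\<leftarrow>ts. bond_energy N g t)"
    using Cons.prems by (intro Cons.IH) simp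
  show ?case
  proof (cases "ts = []")
    case True
    then show ?thesis
      by (simp add: bond_energy_def comp_def)
  next
    case False
    define L where "L = real (length ts)"
    have L: "L > 0"
      using False by (simp add: L_def)
    have "(\<Sum>\<eta>\<in>Omega N. (g (\<eta> \<circ> route_perm N (t # ts)) - g \<eta>)\<^sup>2)
        = (\<Sum>\<eta>\<in>Omega N. ((g (\<eta> \<circ> bond N t \<circ> route_perm N ts) - g (\<eta> \<circ> bond N t))
                            + (g (\<eta> \<circ> bond N t) - g \<eta>))\<^sup>2)"
      by (simp add: comp_assoc)
    also have "\<dots> \<le> (\<Sum>\<eta>\<in>Omega N. (1 + 1 / L) * (g (\<eta> \<circ> bond N t \<circ> route_perm N ts) - g (\<eta> \<circ> bond N t))\<^sup>2
                                   + (1 + L) * (g (\<eta> \<circ> bond N t) - g \<eta>)\<^sup>2)"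
      by (rule sum_mono) (rule power2_add_le_weighted[OF L])
    also have "\<dots> = (1 + 1 / L) * (\<Sum>\<eta>\<in>Omega N. (g (\<eta> \<circ> route_perm N ts) - g \<eta>)\<^sup>2)
                    + (1 + L) * bond_energy N g t"
      using sum_Omega_comp_bond[OF t, of "\<lambda>\<eta>. (g (\<eta> \<circ> route_perm N ts) - g \<eta>)\<^sup>2"]
      by (simp add: sum.distrib sum_distrib_left[symmetric] bond_energy_def)
    also have "\<dots> \<le> (1 + 1 / L) * (L * (\<Sum>t\<leftarrow>ts. bond_energy N g t)) + (1 + L) * bond_energy N g t"
      using IH L by (intro add_mono mult_left_mono) (auto simp: L_def)
    also have "\<dots> = (1 + L) * ((\<Sum>t\<leftarrow>ts. bond_energy N g t) + bond_energy N g t)"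
      using L by (simp add: field_simps)
    finally show ?thesis
      by (simp add: L_def algebra_simps comp_def)
  qed
qed

fun route :: "nat \<Rightarrow> int \<Rightarrow> nat \<Rightarrow> nat list" where
  "route N u 0 = []"
| "route N u (Suc 0) = [site N u]"
| "route N u (Suc (Suc d)) = site N (u + int (Suc d)) # route N u (Suc d) @ [site N (u + int (Suc d))]"


lemma route_perm_route:
  "0 < d \<Longrightarrow> d < N \<Longrightarrow>
     route_perm N (route N u d) = Transposition.transpose (site N u) (site N (u + int d))"
proof (induction N u d rule: route.induct)
  case (1 N u)
  then show ?case by simp
next
  case (2 N u)
  then show ?case by (simp add: bond_site)
next
  case (3 N u d)
  define t where "t = u + int (Suc d)"
  have N: "0 < N"
    using 3 by simp
  have IH: "route_perm N (route N u (Suc d)) = Transposition.transpose (site N u) (site N t)"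
    using 3 by (simp add: t_def)
  have ne1: "site N u \<noteq> site N t" and ne2: "site N u \<noteq> site N (t + 1)"
    using 3 site_add_neq[of "Suc d" N u] site_add_neq[of "Suc (Suc d)" N u]
    by (simp_all add: t_def add.assoc)
  have ne3: "site N t \<noteq> site N (t + 1)"
    using 3 site_add_neq[of 1 N t] by simp
  have "route_perm N (route N u (Suc (Suc d)))
      = bond N (site N t) \<circ> route_perm N (route N u (Suc d)) \<circ> bond N (site N t)"
    by (simp add: route_perm_append t_def comp_assoc)
  also have "\<dots> = Transposition.transpose (site N u) (site N (t + 1))"
    unfolding IH bond_site[OF N] using transpose_comp_triple[of "site N (t + 1)" "site N u" "site N t"] ne1 ne2 ne3
    by (simp add: transpose_commute)
  finally show ?case
    by (simp add: t_def add.assoc)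
qed

lemma length_route: "length (route N u d) = 2 * d - 1"
  by (induction N u d rule: route.induct) auto

lemma route_sites_less: "0 < N \<Longrightarrow> \<forall>t\<in>set (route N u d). t < N"
  by (induction N u d rule: route.induct) (auto simp: site_less)

lemma sum_list_route_le:
  "(\<And>x. 0 \<le> (h x :: real)) \<Longrightarrow> (\<Sum>t\<leftarrow>route N u d. h t) \<le> 2 * (\<Sum>i<d. h (site N (u + int i)))"
  by (induction N u d rule: route.induct) (simp_all add: lessThan_Suc)

lemma inj_on_consecutive_sites:
  assumes "d \<le> N"
  shows "inj_on (\<lambda>i. site N (u + int i)) {..<d}"
proof -
  have "site N (u + int i) \<noteq> site N (u + int j)" if "i < j" "j < d" for i j
    using site_add_neq[of "j - i" N "u + int i"] that assms by (simp add: of_nat_diff)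
  then show ?thesis
    by (metis (no_types, lifting) inj_onI lessThan_iff linorder_neqE_nat)
qed

lemma sum_consecutive_sites_le:
  assumes "d \<le> N" "\<And>x. 0 \<le> (h x :: real)"
  shows "(\<Sum>i<d. h (site N (u + int i))) \<le> (\<Sum>x<N. h x)"
proof (cases "d = 0")
  case True
  then show ?thesis
    using assms(2) by (simp add: sum_nonneg)
next
  case False
  then have N: "0 < N"
    using assms(1) by simp
  have "(\<Sum>i<d. h (site N (u + int i))) = sum h ((\<lambda>i. site N (u + int i)) ` {..<d})"
    by (simp add: sum.reindex[OF inj_on_consecutive_sites[OF assms(1)]])
  also have "\<dots> \<le> (\<Sum>x<N. h x)"
    using N by (intro sum_mono2) (auto simp: assms(2) site_less)
  finally show ?thesis .
qed

lemma transpose_energy_le: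
  assumes "d < N"
  shows "(\<Sum>\<eta>\<in>Omega N. (g (\<eta> \<circ> Transposition.transpose (site N u) (site N (u + int d))) - g \<eta>)\<^sup>2)
           \<le> 4 * real d * (\<Sum>x<N. bond_energy N g x)"
proof (cases "d = 0")
  case True
  then show ?thesis by simp
next
  case False
  have N: "0 < N"
    using assms by simp
  have "(\<Sum>\<eta>\<in>Omega N. (g (\<eta> \<circ> Transposition.transpose (site N u) (site N (u + int d))) - g \<eta>)\<^sup>2)
      = (\<Sum>\<eta>\<in>Omega N. (g (\<eta> \<circ> route_perm N (route N u d)) - g \<eta>)\<^sup>2)"
    using False assms by (simp add: route_perm_route)
  also have "\<dots> \<le> real (length (route N u d)) * (\<Sum>t\<leftarrow>route N u d. bond_energy N g t)"
    by (rule route_energy_le[OF route_sites_less[OF N]])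
  also have "\<dots> \<le> real (2 * d) * (2 * (\<Sum>x<N. bond_energy N g x))"
  proof (rule mult_mono)
    show "real (length (route N u d)) \<le> real (2 * d)"
      by (simp add: length_route)
    show "(\<Sum>t\<leftarrow>route N u d. bond_energy N g t) \<le> 2 * (\<Sum>x<N. bond_energy N g x)"
      using sum_list_route_le[of "bond_energy N g" N u d, OF bond_energy_nonneg]
        sum_consecutive_sites_le[of d N "bond_energy N g" u, OF _ bond_energy_nonneg] assms
      by linarith
  qed (auto intro!: sum_nonneg bond_energy_nonneg sum_list_nonneg)
  finally show ?thesis
    by simp
qed

lemma occ_eq_site: "occ N \<eta> \<alpha> z = (if \<eta> (site N z) = \<alpha> then 1 else 0)"
  by (simp add: occ_def site_def)

lemma site_Suc: "x < N \<Longrightarrow> site N (int x + 1) = Suc x mod N"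
  using Suc_site_mod[of N "int x"] by (simp add: site_of_nat)

lemma sum_bond_occupations:
  assumes "\<eta> \<in> Omega N" "x < N"
  shows "(\<Sum>\<alpha><3. \<Sum>\<beta><3. occ N \<eta> \<alpha> (int x) * occ N \<eta> \<beta> (int x + 1) * F \<alpha> \<beta>)
           = F (\<eta> x) (\<eta> (Suc x mod N))"
proof -
  have species: "\<eta> x < 3" "\<eta> (Suc x mod N) < 3"
    using assms by (auto simp: Omega_def PiE_iff)
  moreover have "(\<Sum>\<beta><3. occ N \<eta> \<alpha> (int x) * occ N \<eta> \<beta> (int x + 1) * F \<alpha> \<beta>)
      = (if \<eta> x = \<alpha> then F \<alpha> (\<eta> (Suc x mod N)) else 0)" for \<alpha>
    using species assms(2) by (simp add: occ_eq_site site_of_nat site_Suc if_distrib[of "\<lambda>a. a * _"] sum.delta cong: if_cong)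
  ultimately show ?thesis
    by (simp add: sum.delta)
qed

lemma exch_occupied: "x < N \<Longrightarrow> exch N \<eta> x (\<eta> x) (\<eta> (Suc x mod N)) = \<eta> \<circ> bond N x"
  by (simp add: exch_def occ_eq_site site_of_nat site_Suc bond_def Fun.swap_def)

lemma Dirichlet_eq_bond_energy:
  "Dirichlet N f = (1/2) * (1/3) ^ N * (\<Sum>x<N. bond_energy N (\<lambda>\<eta>. sqrt (f \<eta>)) x)"
proof -
  have "(\<Sum>x<N. \<Sum>\<alpha><3. \<Sum>\<beta><3. occ N \<eta> \<alpha> (int x) * occ N \<eta> \<beta> (int x + 1) *
            (sqrt (f (exch N \<eta> x \<alpha> \<beta>)) - sqrt (f \<eta>))\<^sup>2)
        = (\<Sum>x<N. (sqrt (f (\<eta> \<circ> bond N x)) - sqrt (f \<eta>))\<^sup>2)" if "\<eta> \<in> Omega N" for \<eta>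
    using that by (intro sum.cong refl) (simp add: sum_bond_occupations exch_occupied)
  then have "Dirichlet N f
      = (1/2) * ((1/3) ^ N * (\<Sum>\<eta>\<in>Omega N. \<Sum>x<N. (sqrt (f (\<eta> \<circ> bond N x)) - sqrt (f \<eta>))\<^sup>2))"
    unfolding Dirichlet_def by (simp add: sum_distrib_left)
  also have "(\<Sum>\<eta>\<in>Omega N. \<Sum>x<N. (sqrt (f (\<eta> \<circ> bond N x)) - sqrt (f \<eta>))\<^sup>2)
      = (\<Sum>x<N. bond_energy N (\<lambda>\<eta>. sqrt (f \<eta>)) x)"
    unfolding bond_energy_def by (rule sum.swap)
  finally show ?thesis
    by simp
qed

lemma Dirichlet_nonneg: "0 \<le> Dirichlet N f"
  unfolding Dirichlet_eq_bond_energy by (simp add: sum_nonneg bond_energy_nonneg)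

lemma density_nonneg: "is_density N f \<Longrightarrow> \<eta> \<in> Omega N \<Longrightarrow> 0 \<le> f \<eta>"
  by (simp add: is_density_def)

lemma density_sum: "is_density N f \<Longrightarrow> (\<Sum>\<eta>\<in>Omega N. f \<eta>) = 3 ^ N"
proof -
  assume "is_density N f"
  then have "(\<Sum>\<eta>\<in>Omega N. f \<eta>) * (1/3) ^ N = 1"
    unfolding is_density_def by (simp add: sum_distrib_right)
  then show ?thesis
    by (simp add: field_simps)
qed

lemma is_density_const: "is_density N (\<lambda>_. 1)"
  by (simp add: is_density_def card_Omega power_one_over)

lemma Dirichlet_const: "Dirichlet N (\<lambda>_. 1) = 0"
  by (simp add: Dirichlet_def)

text \<open>Factor \<open>f a - f b = (sqrt (f a) - sqrt (f b)) (sqrt (f a) + sqrt (f b))\<close> and apply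
  Cauchy-Schwarz; the second factor has total squared mass at most \<open>4 * 3 ^ N\<close>.\<close>

lemma sum_abs_transpose_diff_le:
  assumes d: "is_density N f" and p: "p < N" and q: "q < N"
  defines "\<tau> \<equiv> Transposition.transpose p q"
  shows "(1/3) ^ N * (\<Sum>\<eta>\<in>Omega N. \<bar>f (\<eta> \<circ> \<tau>) - f \<eta>\<bar>)
           \<le> 2 * sqrt ((1/3) ^ N * (\<Sum>\<eta>\<in>Omega N. (sqrt (f (\<eta> \<circ> \<tau>)) - sqrt (f \<eta>))\<^sup>2))"
proof -
  define Q where "Q = (\<Sum>\<eta>\<in>Omega N. (sqrt (f (\<eta> \<circ> \<tau>)) - sqrt (f \<eta>))\<^sup>2)"
  have Q_nonneg: "0 \<le> Q"
    by (simp add: Q_def sum_nonneg)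
  have nonneg: "0 \<le> f \<eta>" "0 \<le> f (\<eta> \<circ> \<tau>)" if "\<eta> \<in> Omega N" for \<eta>
    using that d p q by (simp_all add: \<tau>_def density_nonneg comp_transpose_in_Omega)
  have factor: "\<bar>f (\<eta> \<circ> \<tau>) - f \<eta>\<bar> = \<bar>sqrt (f (\<eta> \<circ> \<tau>)) - sqrt (f \<eta>)\<bar> * (sqrt (f (\<eta> \<circ> \<tau>)) + sqrt (f \<eta>))"
    if "\<eta> \<in> Omega N" for \<eta>
  proof -
    have "f (\<eta> \<circ> \<tau>) - f \<eta> = (sqrt (f (\<eta> \<circ> \<tau>)) - sqrt (f \<eta>)) * (sqrt (f (\<eta> \<circ> \<tau>)) + sqrt (f \<eta>))"
      using nonneg[OF that] by (simp add: algebra_simps)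
    then show ?thesis
      using nonneg[OF that] by (simp add: abs_mult)
  qed
  have sum_sq: "(sqrt (f (\<eta> \<circ> \<tau>)) + sqrt (f \<eta>))\<^sup>2 \<le> 2 * (f (\<eta> \<circ> \<tau>) + f \<eta>)" if "\<eta> \<in> Omega N" for \<eta>
    using nonneg[OF that] zero_le_power2[of "sqrt (f (\<eta> \<circ> \<tau>)) - sqrt (f \<eta>)"]
    by (simp add: power2_eq_square algebra_simps)
  have mass: "(\<Sum>\<eta>\<in>Omega N. f (\<eta> \<circ> \<tau>)) = 3 ^ N"
    using sum_Omega_comp_transpose[OF p q, of f] density_sum[OF d] by (simp add: \<tau>_def)
  have "(\<Sum>\<eta>\<in>Omega N. \<bar>f (\<eta> \<circ> \<tau>) - f \<eta>\<bar>)\<^sup>2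
      = (\<Sum>\<eta>\<in>Omega N. \<bar>sqrt (f (\<eta> \<circ> \<tau>)) - sqrt (f \<eta>)\<bar> * (sqrt (f (\<eta> \<circ> \<tau>)) + sqrt (f \<eta>)))\<^sup>2"
    using factor by (simp cong: sum.cong)
  also have "\<dots> \<le> (\<Sum>\<eta>\<in>Omega N. \<bar>sqrt (f (\<eta> \<circ> \<tau>)) - sqrt (f \<eta>)\<bar>\<^sup>2)
                    * (\<Sum>\<eta>\<in>Omega N. (sqrt (f (\<eta> \<circ> \<tau>)) + sqrt (f \<eta>))\<^sup>2)"
    by (rule Cauchy_Schwarz_ineq_sum)
  also have "\<dots> \<le> Q * (\<Sum>\<eta>\<in>Omega N. 2 * (f (\<eta> \<circ> \<tau>) + f \<eta>))"
    unfolding Q_def power2_abs by (intro mult_left_mono sum_mono sum_sq) (auto intro: sum_nonneg)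
  also have "\<dots> = 4 * 3 ^ N * Q"
    by (simp add: sum_distrib_left[symmetric] sum.distrib mass density_sum[OF d])
  finally have "((1/3) ^ N * (\<Sum>\<eta>\<in>Omega N. \<bar>f (\<eta> \<circ> \<tau>) - f \<eta>\<bar>))\<^sup>2 \<le> ((1/3) ^ N)\<^sup>2 * (4 * 3 ^ N * Q)"
    by (simp add: power_mult_distrib mult_left_mono)
  also have "\<dots> = (2 * sqrt ((1/3) ^ N * Q))\<^sup>2"
    using Q_nonneg by (simp add: power_mult_distrib power2_eq_square power_one_over)
  finally have "(1/3) ^ N * (\<Sum>\<eta>\<in>Omega N. \<bar>f (\<eta> \<circ> \<tau>) - f \<eta>\<bar>) \<le> 2 * sqrt ((1/3) ^ N * Q)"
    by (rule power2_le_imp_le) (simp add: Q_nonneg)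
  then show ?thesis
    by (simp add: Q_def)
qed

lemma antisymmetric_expectation_le:
  assumes d: "is_density N f" and p: "p < N" and q: "q < N"
    and bounded: "\<And>\<eta>. \<bar>G \<eta>\<bar> \<le> 1"
    and antisym: "\<And>\<eta>. G (\<eta> \<circ> Transposition.transpose p q) = - G \<eta>"
  shows "(\<Sum>\<eta>\<in>Omega N. G \<eta> * f \<eta> * (1/3) ^ N)
           \<le> (1/2) * ((1/3) ^ N * (\<Sum>\<eta>\<in>Omega N. \<bar>f (\<eta> \<circ> Transposition.transpose p q) - f \<eta>\<bar>))"
proof -
  let ?\<tau> = "Transposition.transpose p q"
  have "(\<Sum>\<eta>\<in>Omega N. G \<eta> * f \<eta>) = (\<Sum>\<eta>\<in>Omega N. G (\<eta> \<circ> ?\<tau>) * f (\<eta> \<circ> ?\<tau>))"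
    using sum_Omega_comp_transpose[OF p q, of "\<lambda>\<eta>. G \<eta> * f \<eta>"] by simp
  also have "\<dots> = - (\<Sum>\<eta>\<in>Omega N. G \<eta> * f (\<eta> \<circ> ?\<tau>))"
    by (simp add: antisym sum_negf)
  finally have "2 * (\<Sum>\<eta>\<in>Omega N. G \<eta> * f \<eta>) = (\<Sum>\<eta>\<in>Omega N. G \<eta> * (f \<eta> - f (\<eta> \<circ> ?\<tau>)))"
    by (simp add: sum_subtractf right_diff_distrib)
  also have "\<dots> \<le> (\<Sum>\<eta>\<in>Omega N. \<bar>f (\<eta> \<circ> ?\<tau>) - f \<eta>\<bar>)"
  proof (rule sum_mono)
    fix \<eta>
    have "G \<eta> * (f \<eta> - f (\<eta> \<circ> ?\<tau>)) \<le> \<bar>G \<eta>\<bar> * \<bar>f (\<eta> \<circ> ?\<tau>) - f \<eta>\<bar>"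
      by (metis abs_ge_self abs_minus_commute abs_mult)
    also have "\<dots> \<le> \<bar>f (\<eta> \<circ> ?\<tau>) - f \<eta>\<bar>"
      using mult_right_mono[OF bounded[of \<eta>] abs_ge_zero] by simp
    finally show "G \<eta> * (f \<eta> - f (\<eta> \<circ> ?\<tau>)) \<le> \<bar>f (\<eta> \<circ> ?\<tau>) - f \<eta>\<bar>" .
  qed
  finally have bound: "(\<Sum>\<eta>\<in>Omega N. G \<eta> * f \<eta>) \<le> (1/2) * (\<Sum>\<eta>\<in>Omega N. \<bar>f (\<eta> \<circ> ?\<tau>) - f \<eta>\<bar>)"
    by simp
  have "(\<Sum>\<eta>\<in>Omega N. G \<eta> * f \<eta> * (1/3) ^ N) = (\<Sum>\<eta>\<in>Omega N. G \<eta> * f \<eta>) * (1/3) ^ N"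
    by (simp add: sum_distrib_right)
  also have "\<dots> \<le> (1/2) * (\<Sum>\<eta>\<in>Omega N. \<bar>f (\<eta> \<circ> ?\<tau>) - f \<eta>\<bar>) * (1/3) ^ N"
    using bound by (rule mult_right_mono) simp
  finally show ?thesis
    by (simp add: mult_ac)
qed

lemma transpose_energy_le_Dirichlet:
  assumes "nat \<bar>r\<bar> < N"
  shows "(1/3) ^ N * (\<Sum>\<eta>\<in>Omega N.
            (sqrt (f (\<eta> \<circ> Transposition.transpose (site N j) (site N (j - r)))) - sqrt (f \<eta>))\<^sup>2)
           \<le> 8 * real (nat \<bar>r\<bar>) * Dirichlet N f"
proof -
  define d where "d = nat \<bar>r\<bar>"
  obtain u where u: "Transposition.transpose (site N j) (site N (j - r))
                       = Transposition.transpose (site N u) (site N (u + int d))"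
  proof (cases "0 \<le> r")
    case True
    then show ?thesis
      by (intro that[of "j - r"]) (simp add: d_def transpose_commute)
  next
    case False
    then show ?thesis
      by (intro that[of j]) (simp add: d_def)
  qed
  have "(\<Sum>\<eta>\<in>Omega N. (sqrt (f (\<eta> \<circ> Transposition.transpose (site N j) (site N (j - r)))) - sqrt (f \<eta>))\<^sup>2)
      \<le> 4 * real d * (2 * 3 ^ N * Dirichlet N f)"
    unfolding u using transpose_energy_le[of d N "\<lambda>\<eta>. sqrt (f \<eta>)" u] assms
    by (simp add: d_def Dirichlet_eq_bond_energy power_one_over)
  then show ?thesis
    by (simp add: d_def power_one_over field_simps)
qed

lemma antisymmetric_expectation_le_Dirichlet:
  assumes d: "is_density N f" and N: "0 < N" and r: "nat \<bar>r\<bar> < N"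
    and bounded: "\<And>\<eta>. \<bar>G \<eta>\<bar> \<le> 1"
    and antisym: "\<And>\<eta>. G (\<eta> \<circ> Transposition.transpose (site N j) (site N (j - r))) = - G \<eta>"
  shows "(\<Sum>\<eta>\<in>Omega N. G \<eta> * f \<eta> * (1/3) ^ N) \<le> sqrt (8 * real (nat \<bar>r\<bar>) * Dirichlet N f)"
proof -
  have p: "site N j < N" and q: "site N (j - r) < N"
    using N by (simp_all add: site_less)
  have "(\<Sum>\<eta>\<in>Omega N. G \<eta> * f \<eta> * (1/3) ^ N)
      \<le> (1/2) * ((1/3) ^ N * (\<Sum>\<eta>\<in>Omega N. \<bar>f (\<eta> \<circ> Transposition.transpose (site N j) (site N (j - r))) - f \<eta>\<bar>))"
    using d p q bounded antisym by (rule antisymmetric_expectation_le)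
  also have "\<dots> \<le> sqrt ((1/3) ^ N * (\<Sum>\<eta>\<in>Omega N.
                   (sqrt (f (\<eta> \<circ> Transposition.transpose (site N j) (site N (j - r)))) - sqrt (f \<eta>))\<^sup>2))"
    using sum_abs_transpose_diff_le[OF d p q] by simp
  also have "\<dots> \<le> sqrt (8 * real (nat \<bar>r\<bar>) * Dirichlet N f)"
    using transpose_energy_le_Dirichlet[OF r] by simp
  finally show ?thesis .
qed

definition occ_diff :: "nat \<Rightarrow> nat \<Rightarrow> int \<Rightarrow> int \<Rightarrow> (nat \<Rightarrow> nat) \<Rightarrow> real" where
  "occ_diff N \<alpha> r j \<eta> = occ N \<eta> \<alpha> j - occ N \<eta> \<alpha> (j - r)"

definition collide :: "nat \<Rightarrow> int \<Rightarrow> int \<Rightarrow> int \<Rightarrow> bool" where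
  "collide N r i j \<longleftrightarrow>
     i mod int N = j mod int N \<or> i mod int N = (j - r) mod int N \<or> i mod int N = (j + r) mod int N"

lemma abs_occ_diff_le: "\<bar>occ_diff N \<alpha> r j \<eta>\<bar> \<le> 1"
  by (simp add: occ_diff_def occ_def)

lemma abs_occ_diff_mult_le: "\<bar>occ_diff N \<alpha> r i \<eta> * occ_diff N \<alpha> r j \<eta>\<bar> \<le> 1"
  using abs_occ_diff_le[of N \<alpha> r i \<eta>] abs_occ_diff_le[of N \<alpha> r j \<eta>] by (simp add: abs_mult mult_le_one)

lemma pair_expectation_le:
  assumes d: "is_density N f" and N: "0 < N" and r: "nat \<bar>r\<bar> < N"
  shows "(\<Sum>\<eta>\<in>Omega N. occ_diff N \<alpha> r i \<eta> * occ_diff N \<alpha> r j \<eta> * f \<eta> * (1/3) ^ N)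
           \<le> (if collide N r i j then 1 else 0) + sqrt (8 * real (nat \<bar>r\<bar>) * Dirichlet N f)"
proof (cases "collide N r i j")
  case True
  have "(\<Sum>\<eta>\<in>Omega N. occ_diff N \<alpha> r i \<eta> * occ_diff N \<alpha> r j \<eta> * f \<eta> * (1/3) ^ N)
      \<le> (\<Sum>\<eta>\<in>Omega N. f \<eta> * (1/3) ^ N)"
  proof (rule sum_mono)
    fix \<eta> assume "\<eta> \<in> Omega N"
    with d have "occ_diff N \<alpha> r i \<eta> * occ_diff N \<alpha> r j \<eta> * f \<eta> \<le> 1 * f \<eta>"
      by (rule mult_right_mono[OF abs_le_D1[OF abs_occ_diff_mult_le] density_nonneg])
    from mult_right_mono[OF this, of "(1/3) ^ N"]
    show "occ_diff N \<alpha> r i \<eta> * occ_diff N \<alpha> r j \<eta> * f \<eta> * (1/3) ^ N \<le> f \<eta> * (1/3) ^ N"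
      by simp
  qed
  also have "\<dots> = 1"
    using d by (simp add: is_density_def)
  finally have le_1: "(\<Sum>\<eta>\<in>Omega N. occ_diff N \<alpha> r i \<eta> * occ_diff N \<alpha> r j \<eta> * f \<eta> * (1/3) ^ N) \<le> 1" .
  have "0 \<le> sqrt (8 * real (nat \<bar>r\<bar>) * Dirichlet N f)"
    using Dirichlet_nonneg[of N f] by simp
  from add_increasing2[OF this le_1] show ?thesis
    using True by simp
next
  case False
  let ?\<tau> = "Transposition.transpose (site N j) (site N (j - r))"
  have "site N i \<noteq> site N j" "site N i \<noteq> site N (j - r)"
       "site N (i - r) \<noteq> site N j" "site N (i - r) \<noteq> site N (j - r)"
    using False N by (simp_all add: collide_def site_eq_iff mod_eq_dvd_iff algebra_simps)
  then have "occ_diff N \<alpha> r i (\<eta> \<circ> ?\<tau>) = occ_diff N \<alpha> r i \<eta>" for \<eta>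
    by (simp add: occ_diff_def occ_eq_site)
  moreover have "occ_diff N \<alpha> r j (\<eta> \<circ> ?\<tau>) = - occ_diff N \<alpha> r j \<eta>" for \<eta>
    by (simp add: occ_diff_def occ_eq_site)
  ultimately have "(\<Sum>\<eta>\<in>Omega N. occ_diff N \<alpha> r i \<eta> * occ_diff N \<alpha> r j \<eta> * f \<eta> * (1/3) ^ N)
      \<le> sqrt (8 * real (nat \<bar>r\<bar>) * Dirichlet N f)"
    by (intro antisymmetric_expectation_le_Dirichlet[OF d N r, where j = j] abs_occ_diff_mult_le) simp
  then show ?thesis
    using False by simp
qed

lemma card_box_residue_le:
  assumes "2 * k + 1 \<le> N"
  shows "card {i \<in> {-int k..int k}. i mod int N = c} \<le> 1"
proof -
  let ?S = "{i \<in> {-int k..int k}. i mod int N = c}"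
  have "\<forall>a\<in>?S. \<forall>b\<in>?S. a = b"
  proof (intro ballI)
    fix a b assume ab: "a \<in> ?S" "b \<in> ?S"
    then have "int N dvd a - b"
      by (simp add: mod_eq_dvd_iff[symmetric])
    moreover have "\<bar>a - b\<bar> < int N"
      using ab assms by auto
    ultimately show "a = b"
      by (metis abs_of_nat dvd_imp_le_int eq_iff_diff_eq_0 linorder_not_le)
  qed
  moreover have "finite ?S"
    by (rule finite_subset[of _ "{-int k..int k}"]) auto
  ultimately show ?thesis
    using card_le_Suc0_iff_eq[of ?S] by simp
qed

lemma sum_collide_le:
  assumes "2 * k + 1 \<le> N"
  shows "(\<Sum>i = -int k..int k. if collide N r i j then 1 else 0 :: real) \<le> 3"
proof -
  let ?B = "{-int k..int k}"
  have "{i \<in> ?B. collide N r i j}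
      = {i \<in> ?B. i mod int N = j mod int N} \<union> {i \<in> ?B. i mod int N = (j - r) mod int N}
        \<union> {i \<in> ?B. i mod int N = (j + r) mod int N}"
    unfolding collide_def by blast
  then have "card {i \<in> ?B. collide N r i j}
      \<le> card {i \<in> ?B. i mod int N = j mod int N} + card {i \<in> ?B. i mod int N = (j - r) mod int N}
        + card {i \<in> ?B. i mod int N = (j + r) mod int N}"
    by (metis (no_types, lifting) card_Un_le add_right_mono order_trans)
  also have "\<dots> \<le> 1 + 1 + 1"
    by (intro add_mono card_box_residue_le[OF assms])
  finally show ?thesis
    by (simp add: sum.inter_filter[symmetric])
qed

lemma second_moment_occ_diff_le:
  assumes d: "is_density N f" and N: "0 < N" and r: "nat \<bar>r\<bar> < N" and kN: "2 * k + 1 \<le> N"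
  shows "(\<Sum>\<eta>\<in>Omega N. (\<Sum>j = -int k..int k. occ_diff N \<alpha> r j \<eta>)\<^sup>2 * f \<eta> * (1/3) ^ N)
           \<le> 3 * (2 * k + 1) + (2 * k + 1)\<^sup>2 * sqrt (8 * real (nat \<bar>r\<bar>) * Dirichlet N f)"
proof -
  let ?B = "{-int k..int k}"
  let ?s = "sqrt (8 * real (nat \<bar>r\<bar>) * Dirichlet N f)"
  have "(\<Sum>\<eta>\<in>Omega N. (\<Sum>j\<in>?B. occ_diff N \<alpha> r j \<eta>)\<^sup>2 * f \<eta> * (1/3) ^ N)
      = (\<Sum>j\<in>?B. \<Sum>i\<in>?B. \<Sum>\<eta>\<in>Omega N. occ_diff N \<alpha> r i \<eta> * occ_diff N \<alpha> r j \<eta> * f \<eta> * (1/3) ^ N)"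
  proof -
    have "(\<Sum>j\<in>?B. occ_diff N \<alpha> r j \<eta>)\<^sup>2 = (\<Sum>j\<in>?B. \<Sum>i\<in>?B. occ_diff N \<alpha> r i \<eta> * occ_diff N \<alpha> r j \<eta>)"
      for \<eta>
      unfolding power2_eq_square sum_product by (rule sum.swap)
    then have "(\<Sum>j\<in>?B. occ_diff N \<alpha> r j \<eta>)\<^sup>2 * f \<eta> * (1/3) ^ N
        = (\<Sum>j\<in>?B. \<Sum>i\<in>?B. occ_diff N \<alpha> r i \<eta> * occ_diff N \<alpha> r j \<eta> * f \<eta> * (1/3) ^ N)" for \<eta>
      by (simp add: sum_distrib_right)
    then show ?thesis
      by (simp add: sum.swap[of _ "Omega N"])
  qed
  also have "\<dots> \<le> (\<Sum>j\<in>?B. \<Sum>i\<in>?B. (if collide N r i j then 1 else 0) + ?s)"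
    by (intro sum_mono pair_expectation_le[OF d N r])
  also have "\<dots> = (\<Sum>j\<in>?B. \<Sum>i\<in>?B. if collide N r i j then 1 else 0) + (2 * k + 1)\<^sup>2 * ?s"
    by (simp add: sum.distrib power2_eq_square algebra_simps)
  also have "\<dots> \<le> (\<Sum>j\<in>?B. 3) + (2 * k + 1)\<^sup>2 * ?s"
    by (intro add_mono sum_mono sum_collide_le[OF kN]) simp
  finally show ?thesis
    by (simp add: add.commute)
qed

lemma box_diff_eq:
  "box_diff N k r \<eta> = (1 / (2 * real k + 1)) *
     sqrt ((\<Sum>j = -int k..int k. occ_diff N 1 r j \<eta>)\<^sup>2 + (\<Sum>j = -int k..int k. occ_diff N 2 r j \<eta>)\<^sup>2)"
proof -
  have box: "{z::int. \<bar>z\<bar> \<le> int k} = {-int k..int k}"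
    by auto
  have shifted: "(\<Sum>z\<in>{z::int. \<bar>z + r\<bar> \<le> int k}. occ N \<eta> \<alpha> z) = (\<Sum>j = -int k..int k. occ N \<eta> \<alpha> (j - r))"
    for \<alpha>
    by (rule sum.reindex_bij_witness[where i = "\<lambda>j. j - r" and j = "\<lambda>z. z + r"]) auto
  have "(1 / (2 * real k + 1)) * (\<Sum>z\<in>{z::int. \<bar>z\<bar> \<le> int k}. occ N \<eta> \<alpha> z)
        - (1 / (2 * real k + 1)) * (\<Sum>z\<in>{z::int. \<bar>z + r\<bar> \<le> int k}. occ N \<eta> \<alpha> z)
      = (1 / (2 * real k + 1)) * (\<Sum>j = -int k..int k. occ_diff N \<alpha> r j \<eta>)" for \<alpha>
    unfolding box shifted occ_diff_def by (simp add: sum_subtractf right_diff_distrib)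
  then have "box_diff N k r \<eta> = sqrt (((1 / (2 * real k + 1)) * (\<Sum>j = -int k..int k. occ_diff N 1 r j \<eta>))\<^sup>2
                                   + ((1 / (2 * real k + 1)) * (\<Sum>j = -int k..int k. occ_diff N 2 r j \<eta>))\<^sup>2)"
    unfolding box_diff_def Let_def by (simp only:)
  moreover have scale: "sqrt ((c * x)\<^sup>2 + (c * y)\<^sup>2) = c * sqrt (x\<^sup>2 + y\<^sup>2)" if "0 \<le> c" for c x y :: real
    using that by (simp add: power_mult_distrib distrib_left[symmetric] real_sqrt_mult)
  moreover have "0 \<le> 1 / (2 * real k + 1)"
    by simp
  ultimately show ?thesis
    by (simp only:)
qed

lemma weighted_mean_square_le:
  fixes h w :: "'a \<Rightarrow> real"
  assumes "\<And>x. x \<in> A \<Longrightarrow> 0 \<le> w x" and "(\<Sum>x\<in>A. w x) = 1"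
  shows "(\<Sum>x\<in>A. h x * w x)\<^sup>2 \<le> (\<Sum>x\<in>A. (h x)\<^sup>2 * w x)"
proof -
  have "(\<Sum>x\<in>A. h x * w x)\<^sup>2 = (\<Sum>x\<in>A. (h x * sqrt (w x)) * sqrt (w x))\<^sup>2"
    using assms(1) by (simp add: mult.assoc cong: sum.cong)
  also have "\<dots> \<le> (\<Sum>x\<in>A. (h x * sqrt (w x))\<^sup>2) * (\<Sum>x\<in>A. (sqrt (w x))\<^sup>2)"
    by (rule Cauchy_Schwarz_ineq_sum)
  also have "\<dots> = (\<Sum>x\<in>A. (h x)\<^sup>2 * w x)"
    using assms by (simp add: power_mult_distrib cong: sum.cong)
  finally show ?thesis .
qed

lemma expectation_box_diff_le:
  assumes d: "is_density N f" and N: "0 < N" and r: "nat \<bar>r\<bar> < N" and kN: "2 * k + 1 \<le> N"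
  shows "(\<Sum>\<eta>\<in>Omega N. box_diff N k r \<eta> * f \<eta> * (1/3) ^ N)
           \<le> sqrt (6 / (2 * real k + 1) + 2 * sqrt (8 * real (nat \<bar>r\<bar>) * Dirichlet N f))"
proof -
  let ?s = "sqrt (8 * real (nat \<bar>r\<bar>) * Dirichlet N f)"
  let ?K = "2 * real k + 1"
  have rescale: "(1 / K)\<^sup>2 * ((3 * K + K\<^sup>2 * s) + (3 * K + K\<^sup>2 * s)) = 6 / K + 2 * s"
    if "K > 0" for K s :: real
    using that by (simp add: power2_eq_square field_simps)
  let ?M = "\<lambda>\<alpha>. (\<Sum>\<eta>\<in>Omega N. (\<Sum>j = -int k..int k. occ_diff N \<alpha> r j \<eta>)\<^sup>2 * f \<eta> * (1/3) ^ N)"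
  have "(\<Sum>\<eta>\<in>Omega N. box_diff N k r \<eta> * (f \<eta> * (1/3) ^ N))\<^sup>2
      \<le> (\<Sum>\<eta>\<in>Omega N. (box_diff N k r \<eta>)\<^sup>2 * (f \<eta> * (1/3) ^ N))"
    using d by (intro weighted_mean_square_le) (simp_all add: density_nonneg is_density_def)
  also have "\<dots> = (1 / ?K)\<^sup>2 * (?M 1 + ?M 2)"
    unfolding box_diff_eq power_mult_distrib
    by (simp add: sum_distrib_left sum.distrib[symmetric] algebra_simps)
  also have "\<dots> \<le> (1 / ?K)\<^sup>2 * ((3 * ?K + ?K\<^sup>2 * ?s) + (3 * ?K + ?K\<^sup>2 * ?s))"
    using second_moment_occ_diff_le[OF d N r kN] by (intro mult_left_mono add_mono) simp_all
  also have "\<dots> = 6 / ?K + 2 * ?s"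
    by (rule rescale) simp
  finally show ?thesis
    by (simp add: mult.assoc real_le_rsqrt)
qed

lemma sup_quantity_nonneg:
  assumes "0 \<le> c" "0 \<le> \<epsilon>"
  shows "0 \<le> sup_quantity c k \<epsilon> N"
proof -
  have "0 \<le> ereal (\<Sum>\<eta>\<in>Omega N. box_diff N k 0 \<eta> * 1 * (1/3) ^ N)"
    by (simp add: sum_nonneg box_diff_eq)
  also have "\<dots> \<le> sup_quantity c k \<epsilon> N"
    unfolding sup_quantity_def using assms is_density_const[of N] Dirichlet_const[of N]
    by (intro Sup_upper CollectI exI[of _ 0] exI[of _ "\<lambda>_. 1"]) auto
  finally show ?thesis .
qed

text \<open>For \<open>\<epsilon> < 1/4\<close> an admissible shift has \<open>|r| < N\<close>, and once \<open>1/N \<le> \<epsilon>\<close> it satisfies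
  \<open>|r| D(f) \<le> (2\<epsilon>N + 1) c/N \<le> 3c\<epsilon>\<close>.\<close>

lemma sup_quantity_le:
  assumes c: "0 \<le> c" and \<epsilon>: "0 < \<epsilon>" "\<epsilon> < 1/4"
    and N: "2 \<le> N" "2 * k + 1 \<le> N" "1 / real N \<le> \<epsilon>"
  shows "sup_quantity c k \<epsilon> N \<le> ereal (sqrt (6 / (2 * real k + 1) + 2 * sqrt (24 * c * \<epsilon>)))"
  unfolding sup_quantity_def
proof (rule Sup_least, clarify)
  fix r f
  assume r: "real_of_int \<bar>r\<bar> \<le> 2 * \<epsilon> * real N + 1" and d: "is_density N f" and D: "Dirichlet N f \<le> c / real N"
  have "2 * \<epsilon> * real N < real N / 2"
    using \<epsilon> N by (simp add: field_simps)
  then have r_less: "nat \<bar>r\<bar> < N"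
    using r N by linarith
  have "8 * real (nat \<bar>r\<bar>) * Dirichlet N f \<le> 8 * (2 * \<epsilon> * real N + 1) * (c / real N)"
    using r D Dirichlet_nonneg[of N f] by (intro mult_mono) auto
  also have "\<dots> = 16 * c * \<epsilon> + 8 * c * (1 / real N)"
    using N by (simp add: field_simps)
  also have "\<dots> \<le> 16 * c * \<epsilon> + 8 * c * \<epsilon>"
    using N c by (intro add_left_mono mult_left_mono) auto
  finally have bound: "8 * real (nat \<bar>r\<bar>) * Dirichlet N f \<le> 24 * c * \<epsilon>"
    by simp
  have "(\<Sum>\<eta>\<in>Omega N. box_diff N k r \<eta> * f \<eta> * (1/3) ^ N)
      \<le> sqrt (6 / (2 * real k + 1) + 2 * sqrt (8 * real (nat \<bar>r\<bar>) * Dirichlet N f))"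
    using N by (intro expectation_box_diff_le[OF d _ r_less]) auto
  also have "\<dots> \<le> sqrt (6 / (2 * real k + 1) + 2 * sqrt (24 * c * \<epsilon>))"
    using bound by (intro real_sqrt_le_mono add_left_mono mult_left_mono) auto
  finally show "ereal (\<Sum>\<eta>\<in>Omega N. box_diff N k r \<eta> * f \<eta> * (1/3) ^ N)
      \<le> ereal (sqrt (6 / (2 * real k + 1) + 2 * sqrt (24 * c * \<epsilon>)))"
    by simp
qed

lemma limsup_sup_quantity_le:
  assumes "0 \<le> c" "0 < \<epsilon>" "\<epsilon> < 1/4"
  shows "limsup (\<lambda>N. sup_quantity c k \<epsilon> N) \<le> ereal (sqrt (6 / (2 * real k + 1) + 2 * sqrt (24 * c * \<epsilon>)))"
proof (rule Limsup_bounded)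
  have "\<forall>\<^sub>F N in sequentially. 2 \<le> N \<and> 2 * k + 1 \<le> N \<and> nat \<lceil>1 / \<epsilon>\<rceil> \<le> N"
    by (intro eventually_conj eventually_ge_at_top)
  then show "\<forall>\<^sub>F N in sequentially. sup_quantity c k \<epsilon> N
               \<le> ereal (sqrt (6 / (2 * real k + 1) + 2 * sqrt (24 * c * \<epsilon>)))"
  proof eventually_elim
    case (elim N)
    then have "1 / \<epsilon> \<le> real N"
      by linarith
    then have "1 / real N \<le> \<epsilon>"
      using assms elim by (simp add: field_simps)
    then show ?case
      using assms elim by (intro sup_quantity_le) auto
  qed
qed

lemma Limsup_le_tendsto:
  assumes "F \<noteq> bot" "\<forall>\<^sub>F x in F. f x \<le> ereal (g x)" "(g \<longlongrightarrow> l) F"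
  shows "Limsup F f \<le> ereal l"
proof -
  have "Limsup F f \<le> Limsup F (\<lambda>x. ereal (g x))"
    using assms(2) by (rule Limsup_mono)
  also have "\<dots> = ereal l"
    using assms(1,3) by (intro lim_imp_Limsup) (simp_all add: lim_ereal)
  finally show ?thesis .
qed

lemma Limsup_at_right_sup_quantity_le:
  assumes "0 \<le> c"
  shows "Limsup (at_right 0) (\<lambda>\<epsilon>. limsup (\<lambda>N. sup_quantity c k \<epsilon> N)) \<le> ereal (sqrt (6 / (2 * real k + 1)))"
proof (rule Limsup_le_tendsto)
  show "\<forall>\<^sub>F \<epsilon> in at_right 0. limsup (\<lambda>N. sup_quantity c k \<epsilon> N)
          \<le> ereal (sqrt (6 / (2 * real k + 1) + 2 * sqrt (24 * c * \<epsilon>)))"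
  proof -
    have "\<forall>\<^sub>F \<epsilon> in at_right 0. \<epsilon> \<in> {0<..<1/4::real}"
      by (rule eventually_at_right_real) simp
    then show ?thesis
      by eventually_elim (use assms in \<open>auto intro: limsup_sup_quantity_le\<close>)
  qed
  have "((\<lambda>\<epsilon>. sqrt (6 / (2 * real k + 1) + 2 * sqrt (24 * c * \<epsilon>)))
          \<longlongrightarrow> sqrt (6 / (2 * real k + 1) + 2 * sqrt (24 * c * 0))) (at_right 0)"
    by (intro tendsto_intros tendsto_ident_at)
  then show "((\<lambda>\<epsilon>. sqrt (6 / (2 * real k + 1) + 2 * sqrt (24 * c * \<epsilon>)))
               \<longlongrightarrow> sqrt (6 / (2 * real k + 1))) (at_right 0)"
    by simp
qed simp

lemma Limsup_at_right_sup_quantity_nonneg: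
  assumes "0 \<le> c"
  shows "0 \<le> Limsup (at_right 0) (\<lambda>\<epsilon>. limsup (\<lambda>N. sup_quantity c k \<epsilon> N))"
proof (rule le_Limsup)
  show "\<forall>\<^sub>F \<epsilon> in at_right (0::real). 0 \<le> limsup (\<lambda>N. sup_quantity c k \<epsilon> N)"
    using eventually_at_right_less[of 0]
    by eventually_elim (use assms in \<open>auto intro!: le_Limsup always_eventually sup_quantity_nonneg\<close>)
qed simp

theorem lemmaA5:
  fixes c :: real
  assumes "c > 0"
  shows "limsup (\<lambda>k. Limsup (at_right 0) (\<lambda>\<epsilon>. limsup (\<lambda>N. sup_quantity c k \<epsilon> N))) = 0"
proof (rule antisym)
  have "(\<lambda>k. sqrt (6 / (2 * real k + 1))) \<longlonglongrightarrow> 0"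
    by real_asymp
  moreover have "Limsup (at_right 0) (\<lambda>\<epsilon>. limsup (\<lambda>N. sup_quantity c k \<epsilon> N)) \<le> ereal (sqrt (6 / (2 * real k + 1)))"
    for k
    using assms by (intro Limsup_at_right_sup_quantity_le) simp
  ultimately have "limsup (\<lambda>k. Limsup (at_right 0) (\<lambda>\<epsilon>. limsup (\<lambda>N. sup_quantity c k \<epsilon> N))) \<le> ereal 0"
    by (intro Limsup_le_tendsto[OF _ always_eventually]) auto
  then show "limsup (\<lambda>k. Limsup (at_right 0) (\<lambda>\<epsilon>. limsup (\<lambda>N. sup_quantity c k \<epsilon> N))) \<le> 0"
    by (simp add: zero_ereal_def)
  show "0 \<le> limsup (\<lambda>k. Limsup (at_right 0) (\<lambda>\<epsilon>. limsup (\<lambda>N. sup_quantity c k \<epsilon> N)))"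
    using assms by (intro le_Limsup always_eventually allI Limsup_at_right_sup_quantity_nonneg) auto
qed

end
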